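(* Let $V\in C^\infty(\mathbb{R}^n)$ and, for $x\in\mathbb{R}^n$, let $Q(x):=\begin{pmatrix}0&I\\-\frac{\partial^2V}{\partial x^2}(x)&\nu I\end{pmatrix}\in\mathbb{R}^{2n\times2n}$. 1) For any fixed $x\in\mathbb{R}^n$, $Q(x)$ is positive stable (all its eigenvalues have positive real part) if and only if $\frac{\partial^2V}{\partial x^2}(x)$ is positive definite. 2) Let $\frac{\partial^2V}{\partial x^2}(x)$ be positive definite for some $x\in\mathbb{R}^n$. Then: (a) if $\alpha_0>\frac{\nu^2}4$, then $\mu=\frac\nu2$ and there exists a symmetric positive definite matrix $P(x)$ such that $Q(x)P(x)+P(x)Q^T(x)=2\mu P(x)$; (b) if $0<\alpha_0<\frac{\nu^2}4$, then $\mu=\frac{\nu-\sqrt{\nu^2-4\alpha_0}}2$ and there exists a symmetric positive definite matrix $P(x)$ such that $Q(x)P(x)+P(x)Q^T(x)\ge2\mu P(x)$; (c) if $\alpha_0=\frac{\nu^2}4$, then $\mu=\frac\nu2$ and for any $\varepsilon\in(0,\nu)$ there exists a symmetric positive definite matrix $P(x,\varepsilon)$ such that $Q(x)P(x,\varepsilon)+P(x,\varepsilon)Q^T(x)\ge(2\mu-\varepsilon)P(x,\varepsilon)$.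
   Context: $\nu>0$ is a constant and $I$ the $n\times n$ identity. $\alpha(x)$ is the smallest eigenvalue of the Hessian $\frac{\partial^2V}{\partial x^2}(x)$, $\alpha_0:=\inf_{x\in\mathbb{R}^n}\alpha(x)$, and $\mu:=\inf_{x\in\mathbb{R}^n}\min\{\mathrm{Re}(\beta):\beta\text{ an eigenvalue of }Q(x)\}$. For symmetric matrices, $A\ge B$ means $A-B$ is positive semi-definite. *)

theory Defs
  imports "HOL-Analysis.Analysis"
begin

definition partial_deriv :: "'n::finite \<Rightarrow> (real^'n \<Rightarrow> real) \<Rightarrow> real^'n \<Rightarrow> real" where
  "partial_deriv i f x = deriv (\<lambda>t. f (x + t *\<^sub>R axis i 1)) 0"

text \<open>iterated partial derivatives, indices applied from the end of the list\<close>
fun iter_partial :: "'n::finite list \<Rightarrow> (real^'n \<Rightarrow> real) \<Rightarrow> real^'n \<Rightarrow> real" where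
  "iter_partial [] f = f"
| "iter_partial (i # is) f = partial_deriv i (iter_partial is f)"

text \<open>C-infinity: all iterated partial derivatives of all orders exist and are
  (Frechet) differentiable, hence continuous, everywhere\<close>
definition smooth :: "(real^'n::finite \<Rightarrow> real) \<Rightarrow> bool" where
  "smooth f \<longleftrightarrow> (\<forall>is x. iter_partial is f differentiable (at x))"

definition hessian :: "(real^'n::finite \<Rightarrow> real) \<Rightarrow> real^'n \<Rightarrow> real^'n^'n" where
  "hessian V x = (\<chi> i j. partial_deriv j (partial_deriv i V) x)"

definition Qmat :: "real \<Rightarrow> (real^'n::finite \<Rightarrow> real) \<Rightarrow> real^'n \<Rightarrow> real^('n + 'n)^('n + 'n)" where
  "Qmat \<nu> V x = (\<chi> a b. case (a, b) of
      (Inl i, Inl j) \<Rightarrow> 0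
    | (Inl i, Inr j) \<Rightarrow> (if i = j then 1 else 0)
    | (Inr i, Inl j) \<Rightarrow> - (hessian V x $ i $ j)
    | (Inr i, Inr j) \<Rightarrow> (if i = j then \<nu> else 0))"

definition real_eigenvalue :: "real^'n^'n \<Rightarrow> real \<Rightarrow> bool" where
  "real_eigenvalue A a \<longleftrightarrow> (\<exists>v. v \<noteq> 0 \<and> A *v v = a *\<^sub>R v)"

definition eigenvalue :: "real^'m^'m \<Rightarrow> complex \<Rightarrow> bool" where
  "eigenvalue A \<beta> \<longleftrightarrow>
     (\<exists>v::complex^'m. v \<noteq> 0 \<and> (\<chi> i j. complex_of_real (A $ i $ j)) *v v = \<beta> *s v)"

definition positive_stable :: "real^'m^'m \<Rightarrow> bool" where
  "positive_stable A \<longleftrightarrow> (\<forall>\<beta>. eigenvalue A \<beta> \<longrightarrow> Re \<beta> > 0)"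

definition pos_def :: "real^'m^'m \<Rightarrow> bool" where
  "pos_def A \<longleftrightarrow> (\<forall>v. v \<noteq> 0 \<longrightarrow> v \<bullet> (A *v v) > 0)"

definition sym_pos_def :: "real^'m^'m \<Rightarrow> bool" where
  "sym_pos_def A \<longleftrightarrow> transpose A = A \<and> pos_def A"

definition loewner_ge :: "real^'m^'m \<Rightarrow> real^'m^'m \<Rightarrow> bool" where
  "loewner_ge A B \<longleftrightarrow> (\<forall>v. v \<bullet> ((A - B) *v v) \<ge> 0)"

definition alpha :: "(real^'n::finite \<Rightarrow> real) \<Rightarrow> real^'n \<Rightarrow> real" where
  "alpha V x = Min {a. real_eigenvalue (hessian V x) a}"

text \<open>alpha_0 and mu as infima in the extended reals (they may be -infinity in general)\<close>
definition alpha0 :: "(real^'n::finite \<Rightarrow> real) \<Rightarrow> ereal" where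
  "alpha0 V = (INF x. ereal (alpha V x))"

definition mu :: "real \<Rightarrow> (real^'n::finite \<Rightarrow> real) \<Rightarrow> ereal" where
  "mu \<nu> V = (INF x. INF \<beta> \<in> {\<beta>. eigenvalue (Qmat \<nu> V x) \<beta>}. ereal (Re \<beta>))"

end

theory Submission
  imports Defs
begin

text \<open>
  An eigenvector of \<open>Q(x)\<close> has the form \<open>(u, \<beta> u)\<close> with \<open>\<nabla>\<^sup>2V(x) u = (\<nu> \<beta> - \<beta>\<^sup>2) u\<close>, so
  (the Hessian being symmetric by Schwarz's theorem) the eigenvalues of \<open>Q(x)\<close> are exactly the
  roots of \<open>\<beta>\<^sup>2 - \<nu> \<beta> + l\<close> for the eigenvalues \<open>l\<close> of the Hessian. The smallest real part
  of such a root, \<open>(\<nu> - sqrt (max 0 (\<nu>\<^sup>2 - 4 l))) / 2\<close>, is continuous and nondecreasing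
  in \<open>l\<close>; hence it is attained at \<open>l = \<alpha>(x)\<close>, it is positive iff \<open>\<alpha>(x) > 0\<close>, and its
  infimum over \<open>x\<close> is its value at \<open>\<alpha>\<^sub>0\<close>, which gives \<open>\<mu>\<close>.

  The Lyapunov matrices are \<open>P = [[I, \<nu>/2 I], [\<nu>/2 I, \<nabla>\<^sup>2V(x) + c I]]\<close>. Completing the square
  shows \<open>P > 0\<close> once \<open>\<alpha>(x) + c > \<nu>\<^sup>2/4\<close>. For \<open>c = 0\<close> one computes \<open>Q P + P Q\<^sup>T = \<nu> P\<close>,
  and for \<open>c = s\<^sup>2/2\<close> the form of \<open>Q P + P Q\<^sup>T - (\<nu> - s) P\<close> is \<open>s\<close> times a square plus
  \<open>s (\<nabla>\<^sup>2V(x) - (\<nu>\<^sup>2 - s\<^sup>2)/4)\<close>, which is nonnegative when \<open>\<alpha>(x) \<ge> (\<nu>\<^sup>2 - s\<^sup>2)/4\<close>;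
  take \<open>s = sqrt (\<nu>\<^sup>2 - 4 \<alpha>\<^sub>0)\<close> in case (b) and \<open>s = \<epsilon>\<close> in case (c).
\<close>

section \<open>Block matrices\<close>

definition block_matrix ::
    "'a^'n::finite^'m::finite \<Rightarrow> 'a^'p::finite^'m \<Rightarrow> 'a^'n^'q::finite \<Rightarrow> 'a^'p^'q \<Rightarrow> 'a^('n + 'p)^('m + 'q)" where
  "block_matrix A B C D = (\<chi> r s. case r of
      Inl i \<Rightarrow> (case s of Inl j \<Rightarrow> A $ i $ j | Inr j \<Rightarrow> B $ i $ j)
    | Inr i \<Rightarrow> (case s of Inl j \<Rightarrow> C $ i $ j | Inr j \<Rightarrow> D $ i $ j))"

definition upper_half :: "'a^('m::finite + 'n::finite) \<Rightarrow> 'a^'m" where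
  "upper_half v = (\<chi> i. v $ Inl i)"

definition lower_half :: "'a^('m::finite + 'n::finite) \<Rightarrow> 'a^'n" where
  "lower_half v = (\<chi> i. v $ Inr i)"

definition stack_halves :: "'a^'m::finite \<Rightarrow> 'a^'n::finite \<Rightarrow> 'a^('m + 'n)" where
  "stack_halves u w = (\<chi> k. case k of Inl i \<Rightarrow> u $ i | Inr i \<Rightarrow> w $ i)"

lemma sum_UNIV_Plus:
  "(\<Sum>k\<in>UNIV. f k) = (\<Sum>i\<in>UNIV. f (Inl i)) + (\<Sum>j\<in>(UNIV::'b::finite set). f (Inr j :: 'a::finite + 'b))"
  by (simp add: UNIV_Plus_UNIV[symmetric] sum.Plus del: UNIV_Plus_UNIV)

lemma vec_eq_iff_halves: "v = w \<longleftrightarrow> upper_half v = upper_half w \<and> lower_half v = lower_half w"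
  by (auto simp: vec_eq_iff upper_half_def lower_half_def split_sum_all)

lemma halves_simps [simp]:
  "upper_half 0 = 0" "lower_half 0 = 0"
  "upper_half (v + w) = upper_half v + upper_half w" "lower_half (v + w) = lower_half v + lower_half w"
  "upper_half (v - w) = upper_half v - upper_half w" "lower_half (v - w) = lower_half v - lower_half w"
  "upper_half (c *s v) = c *s upper_half v" "lower_half (c *s v) = c *s lower_half v"
  "upper_half (r *\<^sub>R x) = r *\<^sub>R upper_half x" "lower_half (r *\<^sub>R x) = r *\<^sub>R lower_half x"
  by (auto simp: vec_eq_iff upper_half_def lower_half_def)

lemma halves_stack_halves [simp]:
  "upper_half (stack_halves u w) = u" "lower_half (stack_halves u w) = w"
  by (simp_all add: upper_half_def lower_half_def stack_halves_def vec_eq_iff)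

lemma stack_halves_eq_0_iff [simp]: "stack_halves u w = 0 \<longleftrightarrow> u = 0 \<and> w = 0"
  by (metis halves_simps(1,2) halves_stack_halves vec_eq_iff_halves)

lemma upper_half_block_matrix_mult:
  "upper_half (block_matrix A B C D *v v) = A *v upper_half v + B *v lower_half v"
  by (simp add: upper_half_def lower_half_def block_matrix_def vec_eq_iff matrix_vector_mult_def sum_UNIV_Plus)

lemma lower_half_block_matrix_mult:
  "lower_half (block_matrix A B C D *v v) = C *v upper_half v + D *v lower_half v"
  by (simp add: upper_half_def lower_half_def block_matrix_def vec_eq_iff matrix_vector_mult_def sum_UNIV_Plus)

lemma inner_halves: "v \<bullet> w = upper_half v \<bullet> upper_half w + lower_half v \<bullet> lower_half w"
  by (simp add: inner_vec_def sum_UNIV_Plus upper_half_def lower_half_def)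

lemma inner_block_matrix_mult:
  fixes v :: "real^('n::finite + 'n)"
  shows "v \<bullet> (block_matrix A B C D *v v)
    = upper_half v \<bullet> (A *v upper_half v) + upper_half v \<bullet> (B *v lower_half v)
      + lower_half v \<bullet> (C *v upper_half v) + lower_half v \<bullet> (D *v lower_half v)"
  by (simp add: inner_halves[of v] upper_half_block_matrix_mult lower_half_block_matrix_mult inner_add_right)

lemma transpose_add: "transpose (A + B) = transpose A + transpose B"
  by (simp add: transpose_def vec_eq_iff)

lemma transpose_uminus: "transpose (- A) = - transpose A"
  by (simp add: transpose_def vec_eq_iff)

lemma transpose_zero: "transpose 0 = 0"
  by (simp add: transpose_def vec_eq_iff)

lemma transpose_block_matrix:
  "transpose (block_matrix A B C D) = block_matrix (transpose A) (transpose C) (transpose B) (transpose D)"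
  by (auto simp: block_matrix_def transpose_def vec_eq_iff split_sum_all)

lemma scaleR_mat: "r *\<^sub>R mat k = (mat (r * k) :: real^'n^'n)"
  by (simp add: vec_eq_iff mat_def)

lemma scaleR_block_matrix:
  "r *\<^sub>R block_matrix A B C D = block_matrix (r *\<^sub>R A) (r *\<^sub>R B) (r *\<^sub>R C) (r *\<^sub>R D)"
  by (auto simp: block_matrix_def vec_eq_iff split_sum_all)

lemma mat_matrix_vector_mult: "mat k *v v = k *s v"
  by (simp add: vec_eq_iff matrix_vector_mult_def mat_def if_distrib[of "\<lambda>x. x * _"] cong: if_cong)

lemma mat_matrix_vector_mult_real: "mat k *v v = k *\<^sub>R (v::real^'n)"
  by (simp add: mat_matrix_vector_mult scalar_mult_eq_scaleR)

lemma neg_matrix_vector_mult: "(- A) *v x = - (A *v (x::'a::comm_ring_1^'n))"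
  by (simp add: vec_eq_iff matrix_vector_mult_def sum_negf)

section \<open>The smallest eigenvalue of a symmetric matrix\<close>

lemma symmetric_matrix_inner:
  fixes H :: "real^'n^'n"
  assumes "transpose H = H"
  shows "(H *v x) \<bullet> y = x \<bullet> (H *v y)"
  by (metis assms dot_lmul_matrix vector_transpose_matrix)

lemma symmetric_quadratic_form_add:
  fixes H :: "real^'n^'n"
  assumes "transpose H = H"
  shows "(v + t *\<^sub>R d) \<bullet> (H *v (v + t *\<^sub>R d))
    = v \<bullet> (H *v v) + 2 * t * (d \<bullet> (H *v v)) + t\<^sup>2 * (d \<bullet> (H *v d))"
  using symmetric_matrix_inner[OF assms, of v d]
  by (simp add: matrix_vector_right_distrib matrix_vector_mult_scaleR inner_add_left inner_add_right
      inner_commute power2_eq_square algebra_simps)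

lemma linear_term_vanishes_if_nonneg:
  fixes a b :: real
  assumes "\<And>t. 0 \<le> t * a + t\<^sup>2 * b"
  shows "a = 0"
proof (rule ccontr)
  assume "a \<noteq> 0"
  define c where "c = \<bar>b\<bar> + 1"
  define t where "t = - a / c"
  have "c > 0" "b < c"
    by (auto simp: c_def)
  have "c\<^sup>2 * (t * a + t\<^sup>2 * b) = a\<^sup>2 * (b - c)"
    using \<open>c > 0\<close> by (simp add: t_def field_simps power2_eq_square)
  also have "\<dots> < 0"
    using \<open>a \<noteq> 0\<close> \<open>b < c\<close> by (intro mult_pos_neg) auto
  finally show False
    using assms[of t] by (metis mult_nonneg_nonneg not_less zero_le_power2)
qed

lemma psd_quadratic_form_zero_imp_kernel:
  fixes G :: "real^'n^'n"
  assumes "transpose G = G" and "\<And>w. 0 \<le> w \<bullet> (G *v w)" and "v \<bullet> (G *v v) = 0"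
  shows "G *v v = 0"
proof -
  let ?d = "G *v v"
  have "0 \<le> t * (2 * (?d \<bullet> ?d)) + t\<^sup>2 * (?d \<bullet> (G *v ?d))" for t
    using assms(2)[of "v + t *\<^sub>R ?d"] symmetric_quadratic_form_add[OF assms(1), of v t ?d] assms(3)
    by (simp add: inner_commute)
  then have "2 * (?d \<bullet> ?d) = 0"
    by (rule linear_term_vanishes_if_nonneg)
  then show ?thesis
    by simp
qed

text \<open>Rayleigh: a minimiser of the quadratic form on the unit sphere is an eigenvector.\<close>
lemma symmetric_matrix_min_eigenpair:
  fixes H :: "real^'n^'n"
  assumes sym: "transpose H = H"
  obtains v m where "v \<noteq> 0" "H *v v = m *\<^sub>R v" "\<And>w. m * (w \<bullet> w) \<le> w \<bullet> (H *v w)"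
proof -
  let ?f = "\<lambda>v. v \<bullet> (H *v v)"
  have "axis undefined 1 \<in> sphere (0::real^'n) 1"
    by simp
  moreover have "continuous_on (sphere 0 1) ?f"
    by (intro continuous_on_inner continuous_on_id matrix_vector_mult_linear_continuous_on)
  ultimately obtain v where v: "v \<in> sphere 0 1" and v_min: "\<And>y. y \<in> sphere 0 1 \<Longrightarrow> ?f v \<le> ?f y"
    using continuous_attains_inf[OF compact_sphere] by blast
  define m where "m = ?f v"
  have bound: "m * (w \<bullet> w) \<le> ?f w" for w
  proof (cases "w = 0")
    case False
    then have "m \<le> ?f ((1 / norm w) *\<^sub>R w)"
      unfolding m_def by (intro v_min) simp
    also have "\<dots> = ?f w / (w \<bullet> w)"
      by (simp add: matrix_vector_mult_scaleR power2_eq_square dot_square_norm)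
    finally show ?thesis
      using False by (simp add: field_simps)
  qed simp
  let ?G = "H - mat m"
  have G_form: "w \<bullet> (?G *v w) = ?f w - m * (w \<bullet> w)" for w
    by (simp add: matrix_vector_mult_diff_rdistrib inner_diff_right mat_matrix_vector_mult_real)
  have "?G *v v = 0"
  proof (rule psd_quadratic_form_zero_imp_kernel)
    show "transpose ?G = ?G"
      using sym by (simp add: transpose_def vec_eq_iff mat_def)
    show "0 \<le> w \<bullet> (?G *v w)" for w
      using bound[of w] G_form[of w] by simp
    show "v \<bullet> (?G *v v) = 0"
      using v G_form[of v] by (simp add: m_def dot_square_norm)
  qed
  then have "H *v v = m *\<^sub>R v"
    by (simp add: matrix_vector_mult_diff_rdistrib mat_matrix_vector_mult_real)
  moreover have "v \<noteq> 0"
    using v by auto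
  ultimately show ?thesis
    using that bound by blast
qed

lemma real_eigenvalue_ge:
  fixes H :: "real^'n^'n"
  assumes "\<And>w. m * (w \<bullet> w) \<le> w \<bullet> (H *v w)" and "real_eigenvalue H a"
  shows "m \<le> a"
proof -
  obtain v where "v \<noteq> 0" "H *v v = a *\<^sub>R v"
    using assms(2) unfolding real_eigenvalue_def by blast
  then show ?thesis
    using assms(1)[of v] by simp
qed

lemma finite_real_eigenvalues:
  fixes H :: "real^'n^'n"
  assumes sym: "transpose H = H"
  shows "finite {a. real_eigenvalue H a}"
proof -
  let ?S = "{a. real_eigenvalue H a}"
  have "\<forall>a\<in>?S. \<exists>v. v \<noteq> 0 \<and> H *v v = a *\<^sub>R v"
    unfolding real_eigenvalue_def by blast
  then obtain f where f: "\<And>a. a \<in> ?S \<Longrightarrow> f a \<noteq> 0 \<and> H *v f a = a *\<^sub>R f a"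
    by metis
  have eq_if_not_orthogonal: "a = b" if "a \<in> ?S" "b \<in> ?S" "f a \<bullet> f b \<noteq> 0" for a b
  proof -
    have "a * (f a \<bullet> f b) = (H *v f a) \<bullet> f b"
      using f[OF that(1)] by simp
    also have "\<dots> = f a \<bullet> (H *v f b)"
      by (rule symmetric_matrix_inner[OF sym])
    also have "\<dots> = b * (f a \<bullet> f b)"
      using f[OF that(2)] by simp
    finally show ?thesis
      using that(3) by simp
  qed
  have "inj_on f ?S"
  proof (rule inj_onI)
    fix a b assume "a \<in> ?S" "b \<in> ?S" "f a = f b"
    then show "a = b"
      using eq_if_not_orthogonal f by force
  qed
  moreover have "independent (f ` ?S)"
  proof (rule pairwise_orthogonal_independent)
    show "pairwise orthogonal (f ` ?S)"
      unfolding pairwise_def orthogonal_def using eq_if_not_orthogonal by blast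
    show "0 \<notin> f ` ?S"
      using f by force
  qed
  ultimately show ?thesis
    using finite_imageD independent_imp_finite by blast
qed

lemma symmetric_matrix_Min_eigenvalue:
  fixes H :: "real^'n^'n"
  assumes sym: "transpose H = H"
  shows "real_eigenvalue H (Min {a. real_eigenvalue H a})"
    and "Min {a. real_eigenvalue H a} * (w \<bullet> w) \<le> w \<bullet> (H *v w)"
proof -
  obtain v m where v: "v \<noteq> 0" "H *v v = m *\<^sub>R v" and bound: "\<And>w. m * (w \<bullet> w) \<le> w \<bullet> (H *v w)"
    using symmetric_matrix_min_eigenpair[OF sym] by blast
  have "real_eigenvalue H m"
    using v unfolding real_eigenvalue_def by blast
  moreover have "Min {a. real_eigenvalue H a} = m"
    using \<open>real_eigenvalue H m\<close> real_eigenvalue_ge[OF bound]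
    by (intro Min_eqI finite_real_eigenvalues[OF sym]) auto
  ultimately show "real_eigenvalue H (Min {a. real_eigenvalue H a})"
    and "Min {a. real_eigenvalue H a} * (w \<bullet> w) \<le> w \<bullet> (H *v w)"
    using bound by simp_all
qed

lemma symmetric_matrix_pos_def_iff:
  fixes H :: "real^'n^'n"
  assumes sym: "transpose H = H"
  shows "pos_def H \<longleftrightarrow> 0 < Min {a. real_eigenvalue H a}"
proof
  assume "pos_def H"
  obtain v where "v \<noteq> 0" "H *v v = Min {a. real_eigenvalue H a} *\<^sub>R v"
    using symmetric_matrix_Min_eigenvalue(1)[OF sym] unfolding real_eigenvalue_def by blast
  then have "0 < Min {a. real_eigenvalue H a} * (v \<bullet> v)"
    using \<open>pos_def H\<close> unfolding pos_def_def by (metis inner_scaleR_right)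
  moreover have "0 < v \<bullet> v"
    using \<open>v \<noteq> 0\<close> by simp
  ultimately show "0 < Min {a. real_eigenvalue H a}"
    by (rule zero_less_mult_pos2)
next
  assume "0 < Min {a. real_eigenvalue H a}"
  then show "pos_def H"
    unfolding pos_def_def
    using symmetric_matrix_Min_eigenvalue(2)[OF sym] by (meson inner_gt_zero_iff mult_pos_pos order_less_le_trans)
qed

section \<open>Symmetry of the Hessian\<close>

lemma has_real_derivative_along_line:
  fixes g :: "'a::real_normed_vector \<Rightarrow> real"
  assumes "g differentiable (at (y + t *\<^sub>R a))"
  shows "((\<lambda>s. g (y + s *\<^sub>R a)) has_real_derivative frechet_derivative g (at (y + t *\<^sub>R a)) a) (at t)"
proof -
  let ?D = "frechet_derivative g (at (y + t *\<^sub>R a))"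
  have "(g has_derivative ?D) (at (y + t *\<^sub>R a))"
    using assms frechet_derivative_works by blast
  moreover have "((\<lambda>s. y + s *\<^sub>R a) has_derivative (\<lambda>s. s *\<^sub>R a)) (at t)"
    by (auto intro!: derivative_eq_intros)
  ultimately have "((\<lambda>s. g (y + s *\<^sub>R a)) has_derivative (\<lambda>s. ?D (s *\<^sub>R a))) (at t)"
    using has_derivative_compose by blast
  moreover have "(\<lambda>s. ?D (s *\<^sub>R a)) = (*) (?D a)"
    using linear_cmul[OF has_derivative_linear[OF \<open>(g has_derivative ?D) _\<close>]]
    by (auto simp: fun_eq_iff mult.commute)
  ultimately show ?thesis
    unfolding has_field_derivative_def by simp
qed

lemma partial_deriv_eq_frechet_derivative:
  assumes "g differentiable (at z)"
  shows "partial_deriv i g z = frechet_derivative g (at z) (axis i 1)"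
  unfolding partial_deriv_def
  using has_real_derivative_along_line[of g z 0 "axis i 1"] assms by (simp add: DERIV_imp_deriv)

lemma has_real_derivative_partial_deriv:
  assumes "\<And>z. g differentiable (at z)"
  shows "((\<lambda>s. g (y + s *\<^sub>R axis i 1)) has_real_derivative partial_deriv i g (y + t *\<^sub>R axis i 1)) (at t)"
  using has_real_derivative_along_line[of g y t "axis i 1"] partial_deriv_eq_frechet_derivative[OF assms]
  by (simp add: assms)

lemma second_difference_mean_value:
  fixes f :: "real^'n \<Rightarrow> real"
  assumes f: "\<And>z. f differentiable (at z)" and fi: "\<And>z. partial_deriv i f differentiable (at z)"
    and "h > 0"
  obtains \<xi> \<eta> where "0 < \<xi>" "\<xi> < h" "0 < \<eta>" "\<eta> < h"
    "f (x + h *\<^sub>R axis i 1 + h *\<^sub>R axis j 1) - f (x + h *\<^sub>R axis i 1) - f (x + h *\<^sub>R axis j 1) + f x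
       = h\<^sup>2 * partial_deriv j (partial_deriv i f) (x + \<xi> *\<^sub>R axis i 1 + \<eta> *\<^sub>R axis j 1)"
proof -
  let ?a = "axis i 1 :: real^'n" and ?b = "axis j 1 :: real^'n"
  define \<phi> where "\<phi> t = f ((x + h *\<^sub>R ?b) + t *\<^sub>R ?a) - f (x + t *\<^sub>R ?a)" for t
  have "\<And>t. 0 \<le> t \<Longrightarrow> t \<le> h \<Longrightarrow> (\<phi> has_real_derivative
      partial_deriv i f ((x + h *\<^sub>R ?b) + t *\<^sub>R ?a) - partial_deriv i f (x + t *\<^sub>R ?a)) (at t)"
    unfolding \<phi>_def by (intro DERIV_diff has_real_derivative_partial_deriv f)
  from MVT2[OF \<open>h > 0\<close> this] obtain \<xi> where \<xi>: "0 < \<xi>" "\<xi> < h" and \<phi>_diff: "\<phi> h - \<phi> 0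
      = h * (partial_deriv i f ((x + h *\<^sub>R ?b) + \<xi> *\<^sub>R ?a) - partial_deriv i f (x + \<xi> *\<^sub>R ?a))"
    by auto
  define \<psi> where "\<psi> s = partial_deriv i f ((x + \<xi> *\<^sub>R ?a) + s *\<^sub>R ?b)" for s
  have "\<And>s. 0 \<le> s \<Longrightarrow> s \<le> h \<Longrightarrow>
      (\<psi> has_real_derivative partial_deriv j (partial_deriv i f) ((x + \<xi> *\<^sub>R ?a) + s *\<^sub>R ?b)) (at s)"
    unfolding \<psi>_def by (intro has_real_derivative_partial_deriv fi)
  from MVT2[OF \<open>h > 0\<close> this] obtain \<eta> where \<eta>: "0 < \<eta>" "\<eta> < h" and \<psi>_diff:
      "\<psi> h - \<psi> 0 = h * partial_deriv j (partial_deriv i f) ((x + \<xi> *\<^sub>R ?a) + \<eta> *\<^sub>R ?b)"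
    by auto
  have "\<phi> h - \<phi> 0 = h * (\<psi> h - \<psi> 0)"
    unfolding \<phi>_diff \<psi>_def by (simp add: algebra_simps)
  then show ?thesis
    using that[OF \<xi> \<eta>] \<psi>_diff unfolding \<phi>_def by (simp add: algebra_simps power2_eq_square)
qed

lemma mixed_partial_derivs_commute:
  fixes f :: "real^'n \<Rightarrow> real"
  assumes f: "\<And>z. f differentiable (at z)"
    and fi: "\<And>z. partial_deriv i f differentiable (at z)"
    and fj: "\<And>z. partial_deriv j f differentiable (at z)"
    and cont_ij: "isCont (partial_deriv j (partial_deriv i f)) x"
    and cont_ji: "isCont (partial_deriv i (partial_deriv j f)) x"
  shows "partial_deriv j (partial_deriv i f) x = partial_deriv i (partial_deriv j f) x"
proof -
  let ?A = "partial_deriv j (partial_deriv i f)" and ?B = "partial_deriv i (partial_deriv j f)"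
  let ?a = "axis i 1 :: real^'n" and ?b = "axis j 1 :: real^'n"
  have "\<bar>?A x - ?B x\<bar> < 2 * e" if "e > 0" for e
  proof -
    obtain dA where "dA > 0" and dA: "\<And>y. dist y x < dA \<Longrightarrow> dist (?A y) (?A x) < e"
      using cont_ij \<open>e > 0\<close> unfolding continuous_at_eps_delta by blast
    obtain dB where "dB > 0" and dB: "\<And>y. dist y x < dB \<Longrightarrow> dist (?B y) (?B x) < e"
      using cont_ji \<open>e > 0\<close> unfolding continuous_at_eps_delta by blast
    define h where "h = min dA dB / 2"
    have "h > 0"
      using \<open>dA > 0\<close> \<open>dB > 0\<close> by (simp add: h_def)
    have near: "dist (x + s *\<^sub>R u + t *\<^sub>R w) x < min dA dB"
      if "0 < s" "s < h" "0 < t" "t < h" "norm u = 1" "norm w = 1" for s t and u w :: "real^'n"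
    proof -
      have "norm (s *\<^sub>R u + t *\<^sub>R w) \<le> s + t"
        using norm_triangle_ineq[of "s *\<^sub>R u" "t *\<^sub>R w"] that by simp
      then show ?thesis
        using that by (simp add: dist_norm h_def add.assoc)
    qed
    obtain \<xi> \<eta> where \<xi>\<eta>: "0 < \<xi>" "\<xi> < h" "0 < \<eta>" "\<eta> < h" and A_eq:
        "f (x + h *\<^sub>R ?a + h *\<^sub>R ?b) - f (x + h *\<^sub>R ?a) - f (x + h *\<^sub>R ?b) + f x
         = h\<^sup>2 * ?A (x + \<xi> *\<^sub>R ?a + \<eta> *\<^sub>R ?b)"
      using second_difference_mean_value[OF f fi \<open>h > 0\<close>] by blast
    obtain \<xi>' \<eta>' where \<xi>\<eta>': "0 < \<xi>'" "\<xi>' < h" "0 < \<eta>'" "\<eta>' < h" and B_eq: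
        "f (x + h *\<^sub>R ?b + h *\<^sub>R ?a) - f (x + h *\<^sub>R ?b) - f (x + h *\<^sub>R ?a) + f x
         = h\<^sup>2 * ?B (x + \<xi>' *\<^sub>R ?b + \<eta>' *\<^sub>R ?a)"
      using second_difference_mean_value[OF f fj \<open>h > 0\<close>] by blast
    have "x + h *\<^sub>R ?b + h *\<^sub>R ?a = x + h *\<^sub>R ?a + h *\<^sub>R ?b"
      by (simp add: algebra_simps)
    then have "h\<^sup>2 * ?A (x + \<xi> *\<^sub>R ?a + \<eta> *\<^sub>R ?b) = h\<^sup>2 * ?B (x + \<xi>' *\<^sub>R ?b + \<eta>' *\<^sub>R ?a)"
      using A_eq B_eq by (simp only: diff_diff_eq add.commute)
    then have "?A (x + \<xi> *\<^sub>R ?a + \<eta> *\<^sub>R ?b) = ?B (x + \<xi>' *\<^sub>R ?b + \<eta>' *\<^sub>R ?a)"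
      using \<open>h > 0\<close> by simp
    moreover have "dist (?A (x + \<xi> *\<^sub>R ?a + \<eta> *\<^sub>R ?b)) (?A x) < e"
      using dA near[OF \<xi>\<eta>] by simp
    moreover have "dist (?B (x + \<xi>' *\<^sub>R ?b + \<eta>' *\<^sub>R ?a)) (?B x) < e"
      using dB near[OF \<xi>\<eta>'] by simp
    ultimately show ?thesis
      by (simp add: dist_real_def)
  qed
  from this[of "\<bar>?A x - ?B x\<bar> / 2"] show ?thesis
    by (cases "?A x = ?B x") simp_all
qed

lemma transpose_hessian:
  assumes "smooth V"
  shows "transpose (hessian V x) = hessian V x"
proof -
  have diff: "iter_partial is V differentiable (at z)" for "is" z
    using assms unfolding smooth_def by blast
  have "partial_deriv j (partial_deriv i V) x = partial_deriv i (partial_deriv j V) x" for i j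
  proof (rule mixed_partial_derivs_commute)
    show "V differentiable (at z)" "partial_deriv i V differentiable (at z)"
      "partial_deriv j V differentiable (at z)" for z
      using diff[of "[]"] diff[of "[i]"] diff[of "[j]"] by simp_all
    show "isCont (partial_deriv j (partial_deriv i V)) x" "isCont (partial_deriv i (partial_deriv j V)) x"
      using diff[of "[j, i]"] diff[of "[i, j]"] by (simp_all add: differentiable_imp_continuous_within)
  qed
  then show ?thesis
    by (simp add: transpose_def hessian_def vec_eq_iff)
qed

lemma alpha_eigenvalue:
  assumes "smooth V"
  shows "real_eigenvalue (hessian V x) (alpha V x)"
  unfolding alpha_def by (rule symmetric_matrix_Min_eigenvalue(1)[OF transpose_hessian[OF assms]])

lemma hessian_quadratic_form_ge:
  assumes "smooth V" and "a \<le> alpha V x"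
  shows "a * (w \<bullet> w) \<le> w \<bullet> (hessian V x *v w)"
proof -
  have "a * (w \<bullet> w) \<le> alpha V x * (w \<bullet> w)"
    using assms(2) by (intro mult_right_mono) simp_all
  also have "\<dots> \<le> w \<bullet> (hessian V x *v w)"
    unfolding alpha_def by (rule symmetric_matrix_Min_eigenvalue(2)[OF transpose_hessian[OF assms(1)]])
  finally show ?thesis .
qed

lemma alpha0_le_alpha: "alpha0 V \<le> ereal (alpha V x)"
  unfolding alpha0_def by (rule INF_lower) simp

section \<open>The spectrum of Q\<close>

definition complex_matrix :: "real^'n^'m \<Rightarrow> complex^'n^'m" where
  "complex_matrix A = (\<chi> i j. complex_of_real (A $ i $ j))"

definition complex_vector :: "real^'n \<Rightarrow> complex^'n" where
  "complex_vector v = (\<chi> i. complex_of_real (v $ i))"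

lemma complex_matrix_block_matrix:
  "complex_matrix (block_matrix A B C D)
    = block_matrix (complex_matrix A) (complex_matrix B) (complex_matrix C) (complex_matrix D)"
  by (auto simp: block_matrix_def complex_matrix_def vec_eq_iff split_sum_all)

lemma complex_matrix_simps [simp]:
  "complex_matrix 0 = 0" "complex_matrix (mat r) = mat (complex_of_real r)"
  "complex_matrix (- A) = - complex_matrix A"
  by (auto simp: complex_matrix_def vec_eq_iff mat_def)

lemma complex_matrix_mult_complex_vector:
  "complex_matrix A *v complex_vector v = complex_vector (A *v v)"
  by (simp add: vec_eq_iff complex_matrix_def complex_vector_def matrix_vector_mult_def)

lemma block_matrix_eigenvector_iff:
  fixes K :: "'a::comm_ring_1^'n::finite^'n"
  shows "(\<exists>v. v \<noteq> 0 \<and> block_matrix 0 (mat 1) (- K) (mat c) *v v = b *s v)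
    \<longleftrightarrow> (\<exists>u. u \<noteq> 0 \<and> K *v u = (c * b - b * b) *s u)"
proof
  assume "\<exists>v. v \<noteq> 0 \<and> block_matrix 0 (mat 1) (- K) (mat c) *v v = b *s v"
  then obtain v where "v \<noteq> 0" and v: "block_matrix 0 (mat 1) (- K) (mat c) *v v = b *s v"
    by blast
  have lower: "lower_half v = b *s upper_half v"
    using arg_cong[OF v, of upper_half] by (simp add: upper_half_block_matrix_mult)
  have "- (K *v upper_half v) + c *s lower_half v = b *s lower_half v"
    using arg_cong[OF v, of lower_half]
    by (simp add: lower_half_block_matrix_mult neg_matrix_vector_mult mat_matrix_vector_mult)
  then have "K *v upper_half v = (c * b - b * b) *s upper_half v"
    unfolding lower by (simp add: vector_smult_assoc vector_sub_rdistrib algebra_simps)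
  moreover have "upper_half v \<noteq> 0"
    using \<open>v \<noteq> 0\<close> lower vec_eq_iff_halves[of v 0] by auto
  ultimately show "\<exists>u. u \<noteq> 0 \<and> K *v u = (c * b - b * b) *s u"
    by blast
next
  assume "\<exists>u. u \<noteq> 0 \<and> K *v u = (c * b - b * b) *s u"
  then obtain u where "u \<noteq> 0" and u: "K *v u = (c * b - b * b) *s u"
    by blast
  let ?v = "stack_halves u (b *s u)"
  have "block_matrix 0 (mat 1) (- K) (mat c) *v ?v = b *s ?v"
    unfolding vec_eq_iff_halves[of "block_matrix _ _ _ _ *v _"]
    by (simp add: upper_half_block_matrix_mult lower_half_block_matrix_mult neg_matrix_vector_mult
        mat_matrix_vector_mult u vector_smult_assoc vector_sub_rdistrib algebra_simps)
  then show "\<exists>v. v \<noteq> 0 \<and> block_matrix 0 (mat 1) (- K) (mat c) *v v = b *s v"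
    using \<open>u \<noteq> 0\<close> by (intro exI[of _ ?v]) simp
qed

text \<open>Symmetry forces \<open>Im z = 0\<close>; then the real and imaginary parts of \<open>u\<close> are real eigenvectors.\<close>
lemma symmetric_complex_eigenvector_iff:
  fixes H :: "real^'n^'n"
  assumes sym: "transpose H = H"
  shows "(\<exists>u. u \<noteq> 0 \<and> complex_matrix H *v u = z *s u) \<longleftrightarrow> Im z = 0 \<and> real_eigenvalue H (Re z)"
proof
  assume "\<exists>u. u \<noteq> 0 \<and> complex_matrix H *v u = z *s u"
  then obtain u where "u \<noteq> 0" and u: "complex_matrix H *v u = z *s u"
    by blast
  define a where "a = (\<chi> i. Re (u $ i))"
  define b where "b = (\<chi> i. Im (u $ i))"
  have row: "(complex_matrix H *v u) $ k = z * u $ k" for k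
    using u by simp
  have Ha: "H *v a = Re z *\<^sub>R a - Im z *\<^sub>R b"
    using arg_cong[OF row, of Re]
    by (simp add: vec_eq_iff matrix_vector_mult_def complex_matrix_def a_def b_def Re_sum)
  have Hb: "H *v b = Im z *\<^sub>R a + Re z *\<^sub>R b"
    using arg_cong[OF row, of Im]
    by (simp add: vec_eq_iff matrix_vector_mult_def complex_matrix_def a_def b_def Im_sum algebra_simps)
  have "(H *v a) \<bullet> b = a \<bullet> (H *v b)"
    by (rule symmetric_matrix_inner[OF sym])
  then have "Im z * (a \<bullet> a + b \<bullet> b) = 0"
    unfolding Ha Hb by (simp add: inner_diff_left inner_add_right inner_commute algebra_simps)
  moreover have "a \<noteq> 0 \<or> b \<noteq> 0"
    using \<open>u \<noteq> 0\<close> by (auto simp: a_def b_def vec_eq_iff complex_eq_iff)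
  then have "a \<bullet> a + b \<bullet> b > 0"
    by (metis add_nonneg_pos add_pos_nonneg inner_ge_zero inner_gt_zero_iff)
  ultimately have "Im z = 0"
    by simp
  moreover have "real_eigenvalue H (Re z)"
    using \<open>a \<noteq> 0 \<or> b \<noteq> 0\<close> Ha Hb \<open>Im z = 0\<close> unfolding real_eigenvalue_def by auto
  ultimately show "Im z = 0 \<and> real_eigenvalue H (Re z)"
    by blast
next
  assume "Im z = 0 \<and> real_eigenvalue H (Re z)"
  then obtain v where "v \<noteq> 0" and v: "H *v v = Re z *\<^sub>R v" and z: "z = complex_of_real (Re z)"
    unfolding real_eigenvalue_def by (auto simp: complex_eq_iff)
  have "complex_matrix H *v complex_vector v = complex_vector (Re z *\<^sub>R v)"
    by (simp add: complex_matrix_mult_complex_vector v)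
  also have "\<dots> = z *s complex_vector v"
    by (subst z) (simp add: complex_vector_def vec_eq_iff)
  finally show "\<exists>u. u \<noteq> 0 \<and> complex_matrix H *v u = z *s u"
    using \<open>v \<noteq> 0\<close> by (intro exI[of _ "complex_vector v"]) (auto simp: complex_vector_def vec_eq_iff)
qed

lemma eigenvalue_block_matrix_iff:
  fixes H :: "real^'n^'n" and \<beta> :: complex
  assumes sym: "transpose H = H"
  shows "eigenvalue (block_matrix 0 (mat 1) (- H) (mat \<nu>)) \<beta>
    \<longleftrightarrow> (\<exists>l. real_eigenvalue H l \<and> \<beta>\<^sup>2 - \<nu> * \<beta> + l = 0)"
proof -
  have "eigenvalue (block_matrix 0 (mat 1) (- H) (mat \<nu>)) \<beta>
      \<longleftrightarrow> (\<exists>u. u \<noteq> 0 \<and> complex_matrix H *v u = (\<nu> * \<beta> - \<beta> * \<beta>) *s u)"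
    using block_matrix_eigenvector_iff[of "complex_matrix H" "complex_of_real \<nu>" \<beta>]
    by (simp add: eigenvalue_def complex_matrix_def[symmetric] complex_matrix_block_matrix)
  also have "\<dots> \<longleftrightarrow> (\<exists>l. real_eigenvalue H l \<and> \<beta>\<^sup>2 - \<nu> * \<beta> + l = 0)"
    unfolding symmetric_complex_eigenvector_iff[OF sym]
  proof safe
    assume "Im (\<nu> * \<beta> - \<beta> * \<beta>) = 0" "real_eigenvalue H (Re (\<nu> * \<beta> - \<beta> * \<beta>))"
    then show "\<exists>l. real_eigenvalue H l \<and> \<beta>\<^sup>2 - \<nu> * \<beta> + l = 0"
      by (intro exI[of _ "Re (\<nu> * \<beta> - \<beta> * \<beta>)"]) (auto simp: complex_eq_iff power2_eq_square)
  next
    fix l assume "real_eigenvalue H l" "\<beta>\<^sup>2 - \<nu> * \<beta> + l = 0"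
    then have "\<nu> * \<beta> - \<beta> * \<beta> = complex_of_real l"
      by (simp add: power2_eq_square algebra_simps)
    then show "Im (\<nu> * \<beta> - \<beta> * \<beta>) = 0" "real_eigenvalue H (Re (\<nu> * \<beta> - \<beta> * \<beta>))"
      using \<open>real_eigenvalue H l\<close> by simp_all
  qed
  finally show ?thesis .
qed

lemma Qmat_eq_block_matrix: "Qmat \<nu> V x = block_matrix 0 (mat 1) (- hessian V x) (mat \<nu>)"
  by (auto simp: Qmat_def block_matrix_def vec_eq_iff split_sum_all mat_def)

lemma eigenvalue_Qmat_iff:
  assumes "smooth V"
  shows "eigenvalue (Qmat \<nu> V x) \<beta>
    \<longleftrightarrow> (\<exists>l. real_eigenvalue (hessian V x) l \<and> \<beta>\<^sup>2 - \<nu> * \<beta> + l = 0)"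
  unfolding Qmat_eq_block_matrix by (rule eigenvalue_block_matrix_iff[OF transpose_hessian[OF assms]])

section \<open>The spectral abscissa of Q\<close>

text \<open>The smallest real part of a root of \<open>z\<^sup>2 - \<nu> z + l\<close>: the \<open>max\<close> covers the
  complex roots \<open>\<nu>/2 \<plusminus> i sqrt (4 l - \<nu>\<^sup>2) / 2\<close> for \<open>l > \<nu>\<^sup>2 / 4\<close>.\<close>
definition min_re_root :: "real \<Rightarrow> real \<Rightarrow> real" where
  "min_re_root \<nu> l = (\<nu> - sqrt (max 0 (\<nu>\<^sup>2 - 4 * l))) / 2"

lemma min_re_root_le_Re:
  fixes \<beta> :: complex and \<nu> l :: real
  assumes "\<beta>\<^sup>2 - \<nu> * \<beta> + l = 0"
  shows "min_re_root \<nu> l \<le> Re \<beta>"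
proof -
  have re: "(Re \<beta>)\<^sup>2 - (Im \<beta>)\<^sup>2 - \<nu> * Re \<beta> + l = 0" and im: "Im \<beta> * (2 * Re \<beta> - \<nu>) = 0"
    using arg_cong[OF assms, of Re] arg_cong[OF assms, of Im]
    by (simp_all add: power2_eq_square algebra_simps)
  show ?thesis
  proof (cases "Im \<beta> = 0")
    case True
    then have "\<nu>\<^sup>2 - 4 * l = (2 * Re \<beta> - \<nu>)\<^sup>2"
      using re by (simp add: power2_eq_square algebra_simps)
    then have "max 0 (\<nu>\<^sup>2 - 4 * l) = (2 * Re \<beta> - \<nu>)\<^sup>2"
      by (simp add: max_absorb2)
    then show ?thesis
      unfolding min_re_root_def by simp
  next
    case False
    then have "Re \<beta> = \<nu> / 2"
      using im by simp
    moreover have "0 \<le> sqrt (max 0 (\<nu>\<^sup>2 - 4 * l))"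
      by simp
    ultimately show ?thesis
      unfolding min_re_root_def by simp
  qed
qed

lemma min_re_root_attained: "\<exists>\<beta>::complex. \<beta>\<^sup>2 - \<nu> * \<beta> + l = 0 \<and> Re \<beta> = min_re_root \<nu> l"
proof (intro exI conjI)
  let ?\<beta> = "Complex (min_re_root \<nu> l) (sqrt (max 0 (4 * l - \<nu>\<^sup>2)) / 2)"
  show "?\<beta>\<^sup>2 - \<nu> * ?\<beta> + l = 0"
    by (cases "4 * l \<le> \<nu>\<^sup>2") (simp_all add: complex_eq_iff min_re_root_def power2_eq_square field_simps)
qed simp

lemma mono_min_re_root: "mono (min_re_root \<nu>)"
  by (intro monoI) (simp add: min_re_root_def)

lemma continuous_on_min_re_root: "continuous_on A (min_re_root \<nu>)"
  unfolding min_re_root_def by (intro continuous_intros) auto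

lemma min_re_root_pos_iff:
  assumes "\<nu> > 0"
  shows "0 < min_re_root \<nu> l \<longleftrightarrow> 0 < l"
proof -
  have "0 < min_re_root \<nu> l \<longleftrightarrow> sqrt (max 0 (\<nu>\<^sup>2 - 4 * l)) < sqrt (\<nu>\<^sup>2)"
    using assms by (simp add: min_re_root_def)
  also have "\<dots> \<longleftrightarrow> max 0 (\<nu>\<^sup>2 - 4 * l) < \<nu>\<^sup>2"
    by (rule real_sqrt_less_iff)
  also have "\<dots> \<longleftrightarrow> 0 < l"
    using \<open>\<nu> > 0\<close> zero_less_power2[of \<nu>] unfolding max_def by (smt (verit))
  finally show ?thesis .
qed

lemma min_re_root_critical:
  assumes "\<nu>\<^sup>2 / 4 \<le> l"
  shows "min_re_root \<nu> l = \<nu> / 2"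
  using assms by (simp add: min_re_root_def)

lemma INF_ereal_mono_continuous:
  fixes g :: "real \<Rightarrow> real"
  assumes "mono g" and "continuous_on UNIV g" and inf: "(INF x\<in>A. ereal (f x)) = ereal a"
  shows "(INF x\<in>A. ereal (g (f x))) = ereal (g a)"
proof -
  have "A \<noteq> {}"
    using inf by (force simp: top_ereal_def)
  have lower: "a \<le> f x" if "x \<in> A" for x
    using INF_lower[OF that, of "\<lambda>x. ereal (f x)"] inf by simp
  then have "bdd_below (f ` A)"
    by (rule bdd_belowI2)
  then have "Inf (f ` A) = a"
    using ereal_Inf'[of "f ` A"] \<open>A \<noteq> {}\<close> inf by (simp add: image_comp)
  moreover have "continuous (at_right a) g"
    using assms(2) by (simp add: continuous_on_eq_continuous_at continuous_at_imp_continuous_at_within)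
  ultimately have "g a = (INF x\<in>A. g (f x))"
    using continuous_at_Inf_mono[OF \<open>mono g\<close> _ _ \<open>bdd_below (f ` A)\<close>] \<open>A \<noteq> {}\<close>
    by (simp add: image_comp)
  moreover have "bdd_below ((\<lambda>x. g (f x)) ` A)"
    using lower \<open>mono g\<close> by (intro bdd_belowI2) (erule monoD, assumption)
  ultimately show ?thesis
    using ereal_Inf'[of "(\<lambda>x. g (f x)) ` A"] \<open>A \<noteq> {}\<close> by (simp add: image_comp)
qed

lemma min_re_root_le_Re_eigenvalue_Qmat:
  assumes "smooth V" and "eigenvalue (Qmat \<nu> V x) \<beta>"
  shows "min_re_root \<nu> (alpha V x) \<le> Re \<beta>"
proof -
  obtain l where l: "real_eigenvalue (hessian V x) l" and root: "\<beta>\<^sup>2 - \<nu> * \<beta> + l = 0"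
    using assms eigenvalue_Qmat_iff by blast
  have "alpha V x \<le> l"
    using real_eigenvalue_ge[OF hessian_quadratic_form_ge[OF assms(1) order_refl] l] .
  then have "min_re_root \<nu> (alpha V x) \<le> min_re_root \<nu> l"
    using mono_min_re_root by (rule monoD[rotated])
  also have "\<dots> \<le> Re \<beta>"
    using root by (rule min_re_root_le_Re)
  finally show ?thesis .
qed

lemma eigenvalue_Qmat_min_re_root:
  assumes "smooth V"
  obtains \<beta> where "eigenvalue (Qmat \<nu> V x) \<beta>" and "Re \<beta> = min_re_root \<nu> (alpha V x)"
  using min_re_root_attained[of \<nu> "alpha V x"] alpha_eigenvalue[OF assms] eigenvalue_Qmat_iff[OF assms]
  by metis

lemma INF_Re_eigenvalue_Qmat:
  assumes "smooth V"
  shows "(INF \<beta>\<in>{\<beta>. eigenvalue (Qmat \<nu> V x) \<beta>}. ereal (Re \<beta>)) = ereal (min_re_root \<nu> (alpha V x))"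
proof (rule antisym)
  obtain \<beta> where "eigenvalue (Qmat \<nu> V x) \<beta>" "Re \<beta> = min_re_root \<nu> (alpha V x)"
    using eigenvalue_Qmat_min_re_root[OF assms] .
  then show "(INF \<beta>\<in>{\<beta>. eigenvalue (Qmat \<nu> V x) \<beta>}. ereal (Re \<beta>)) \<le> ereal (min_re_root \<nu> (alpha V x))"
    by (intro INF_lower2[of \<beta>]) simp_all
  show "ereal (min_re_root \<nu> (alpha V x)) \<le> (INF \<beta>\<in>{\<beta>. eigenvalue (Qmat \<nu> V x) \<beta>}. ereal (Re \<beta>))"
    using min_re_root_le_Re_eigenvalue_Qmat[OF assms] by (intro INF_greatest) simp
qed

lemma mu_eq_INF_min_re_root:
  assumes "smooth V"
  shows "mu \<nu> V = (INF x. ereal (min_re_root \<nu> (alpha V x)))"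
  unfolding mu_def INF_Re_eigenvalue_Qmat[OF assms] ..

lemma mu_eq_half:
  assumes "smooth V" and "\<And>x. \<nu>\<^sup>2 / 4 \<le> alpha V x"
  shows "mu \<nu> V = ereal (\<nu> / 2)"
  using assms by (simp add: mu_eq_INF_min_re_root min_re_root_critical)

lemma positive_stable_Qmat_iff:
  assumes "smooth V" and "\<nu> > 0"
  shows "positive_stable (Qmat \<nu> V x) \<longleftrightarrow> pos_def (hessian V x)"
proof -
  have "positive_stable (Qmat \<nu> V x) \<longleftrightarrow> 0 < min_re_root \<nu> (alpha V x)"
    unfolding positive_stable_def
    using min_re_root_le_Re_eigenvalue_Qmat[OF assms(1)] eigenvalue_Qmat_min_re_root[OF assms(1)]
    by (metis order_less_le_trans)
  also have "\<dots> \<longleftrightarrow> 0 < alpha V x"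
    by (rule min_re_root_pos_iff[OF assms(2)])
  also have "\<dots> \<longleftrightarrow> pos_def (hessian V x)"
    unfolding alpha_def by (rule symmetric_matrix_pos_def_iff[OF transpose_hessian[OF assms(1)], symmetric])
  finally show ?thesis .
qed

section \<open>Lyapunov matrices\<close>

definition lyapunov_matrix :: "real \<Rightarrow> real \<Rightarrow> real^'n::finite^'n \<Rightarrow> real^('n + 'n)^('n + 'n)" where
  "lyapunov_matrix \<nu> c H = block_matrix (mat 1) (mat (\<nu> / 2)) (mat (\<nu> / 2)) (H + mat c)"

lemma transpose_lyapunov_matrix:
  "transpose H = H \<Longrightarrow> transpose (lyapunov_matrix \<nu> c H) = lyapunov_matrix \<nu> c H"
  by (simp add: lyapunov_matrix_def transpose_block_matrix transpose_add)

lemma lyapunov_matrix_quadratic_form: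
  "v \<bullet> (lyapunov_matrix \<nu> c H *v v)
    = upper_half v \<bullet> upper_half v + \<nu> * (upper_half v \<bullet> lower_half v)
      + lower_half v \<bullet> (H *v lower_half v) + c * (lower_half v \<bullet> lower_half v)"
  by (simp add: lyapunov_matrix_def inner_block_matrix_mult mat_matrix_vector_mult_real
      matrix_vector_mult_add_rdistrib inner_add_right inner_commute algebra_simps)

lemma lyapunov_matrix_sym_pos_def:
  fixes H :: "real^'n^'n"
  assumes sym: "transpose H = H" and bound: "\<And>w. \<alpha> * (w \<bullet> w) \<le> w \<bullet> (H *v w)"
    and "\<nu>\<^sup>2 / 4 < \<alpha> + c"
  shows "sym_pos_def (lyapunov_matrix \<nu> c H)"
  unfolding sym_pos_def_def pos_def_def
proof (intro conjI allI impI transpose_lyapunov_matrix[OF sym])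
  fix v :: "real^('n + 'n)"
  assume "v \<noteq> 0"
  define u w where "u = upper_half v" and "w = lower_half v"
  have "v \<bullet> (lyapunov_matrix \<nu> c H *v v)
      = (u + (\<nu> / 2) *\<^sub>R w) \<bullet> (u + (\<nu> / 2) *\<^sub>R w) + (w \<bullet> (H *v w) - \<alpha> * (w \<bullet> w))
        + (\<alpha> + c - \<nu>\<^sup>2 / 4) * (w \<bullet> w)"
    unfolding lyapunov_matrix_quadratic_form u_def[symmetric] w_def[symmetric]
    by (simp add: inner_add_left inner_add_right inner_commute power2_eq_square algebra_simps)
  moreover have "0 < (u + (\<nu> / 2) *\<^sub>R w) \<bullet> (u + (\<nu> / 2) *\<^sub>R w) + (\<alpha> + c - \<nu>\<^sup>2 / 4) * (w \<bullet> w)"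
  proof (cases "w = 0")
    case True
    then show ?thesis
      using \<open>v \<noteq> 0\<close> vec_eq_iff_halves[of v 0] by (simp add: u_def w_def)
  next
    case False
    then show ?thesis
      using \<open>\<nu>\<^sup>2 / 4 < \<alpha> + c\<close> by (intro add_nonneg_pos) simp_all
  qed
  ultimately show "0 < v \<bullet> (lyapunov_matrix \<nu> c H *v v)"
    using bound[of w] by linarith
qed

lemma lyapunov_sum:
  fixes H :: "real^'n^'n" and \<nu> c :: real
  assumes sym: "transpose H = H"
  defines "Q \<equiv> block_matrix 0 (mat 1) (- H) (mat \<nu>)" and "P \<equiv> lyapunov_matrix \<nu> c H"
  shows "Q ** P + P ** transpose Q
    = block_matrix (mat \<nu>) (mat (c + \<nu>\<^sup>2 / 2)) (mat (c + \<nu>\<^sup>2 / 2)) (\<nu> *\<^sub>R H + mat (2 * \<nu> * c))"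
  unfolding matrix_eq
proof
  fix v
  have QT: "transpose Q = block_matrix 0 (- H) (mat 1) (mat \<nu>)"
    using sym by (simp add: Q_def transpose_block_matrix transpose_uminus transpose_zero)
  show "(Q ** P + P ** transpose Q) *v v
    = block_matrix (mat \<nu>) (mat (c + \<nu>\<^sup>2 / 2)) (mat (c + \<nu>\<^sup>2 / 2)) (\<nu> *\<^sub>R H + mat (2 * \<nu> * c)) *v v"
    unfolding vec_eq_iff_halves[of "_ *v v"] QT
    by (simp add: Q_def P_def lyapunov_matrix_def matrix_vector_mult_add_rdistrib
        matrix_vector_mul_assoc[symmetric] upper_half_block_matrix_mult lower_half_block_matrix_mult
        neg_matrix_vector_mult mat_matrix_vector_mult_real matrix_vector_right_distrib
        matrix_vector_mult_scaleR scaleR_matrix_vector_assoc[symmetric])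
      (simp add: vec_eq_iff field_simps power2_eq_square)
qed

lemma lyapunov_equation:
  fixes H :: "real^'n^'n" and \<nu> :: real
  assumes sym: "transpose H = H"
  defines "Q \<equiv> block_matrix 0 (mat 1) (- H) (mat \<nu>)" and "P \<equiv> lyapunov_matrix \<nu> 0 H"
  shows "Q ** P + P ** transpose Q = \<nu> *\<^sub>R P"
  unfolding Q_def P_def lyapunov_sum[OF sym]
  by (simp add: lyapunov_matrix_def scaleR_block_matrix scaleR_mat scaleR_add_right power2_eq_square)

lemma lyapunov_inequality:
  fixes H :: "real^'n^'n" and \<nu> s :: real
  assumes sym: "transpose H = H" and "0 < s"
    and bound: "\<And>w. (\<nu>\<^sup>2 - s\<^sup>2) / 4 * (w \<bullet> w) \<le> w \<bullet> (H *v w)"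
  defines "Q \<equiv> block_matrix 0 (mat 1) (- H) (mat \<nu>)" and "P \<equiv> lyapunov_matrix \<nu> (s\<^sup>2 / 2) H"
  shows "loewner_ge (Q ** P + P ** transpose Q) ((\<nu> - s) *\<^sub>R P)"
  unfolding loewner_ge_def
proof
  fix v :: "real^('n + 'n)"
  define u w where "u = upper_half v" and "w = lower_half v"
  define t where "t = (s + \<nu>) / 2"
  have "v \<bullet> ((Q ** P + P ** transpose Q - (\<nu> - s) *\<^sub>R P) *v v)
      = s * ((u + t *\<^sub>R w) \<bullet> (u + t *\<^sub>R w)) + s * (w \<bullet> (H *v w) - (\<nu>\<^sup>2 - s\<^sup>2) / 4 * (w \<bullet> w))"
    unfolding Q_def P_def lyapunov_sum[OF sym]
    by (simp add: matrix_vector_mult_diff_rdistrib scaleR_matrix_vector_assoc[symmetric] inner_diff_right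
        inner_block_matrix_mult lyapunov_matrix_quadratic_form mat_matrix_vector_mult_real
        matrix_vector_mult_add_rdistrib inner_add_left inner_add_right inner_commute
        u_def[symmetric] w_def[symmetric] t_def power2_eq_square field_simps)
  also have "\<dots> \<ge> 0"
    using bound[of w] \<open>0 < s\<close> by simp
  finally show "0 \<le> v \<bullet> ((Q ** P + P ** transpose Q - (\<nu> - s) *\<^sub>R P) *v v)" .
qed

lemma Qmat_lyapunov_equation:
  assumes smooth: "smooth V" and "\<nu>\<^sup>2 / 4 < alpha V x"
  defines "P \<equiv> lyapunov_matrix \<nu> 0 (hessian V x)"
  shows "sym_pos_def P" and "Qmat \<nu> V x ** P + P ** transpose (Qmat \<nu> V x) = \<nu> *\<^sub>R P"
proof -
  show "sym_pos_def P"
    unfolding P_def using assms(2)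
    by (intro lyapunov_matrix_sym_pos_def[OF transpose_hessian[OF smooth]
          hessian_quadratic_form_ge[OF smooth order_refl]]) simp
  show "Qmat \<nu> V x ** P + P ** transpose (Qmat \<nu> V x) = \<nu> *\<^sub>R P"
    unfolding Qmat_eq_block_matrix P_def by (rule lyapunov_equation[OF transpose_hessian[OF smooth]])
qed

lemma Qmat_lyapunov_inequality:
  assumes smooth: "smooth V" and "0 < s" and "(\<nu>\<^sup>2 - s\<^sup>2) / 4 \<le> alpha V x"
  defines "P \<equiv> lyapunov_matrix \<nu> (s\<^sup>2 / 2) (hessian V x)"
  shows "sym_pos_def P" and "loewner_ge (Qmat \<nu> V x ** P + P ** transpose (Qmat \<nu> V x)) ((\<nu> - s) *\<^sub>R P)"
proof -
  have bound: "(\<nu>\<^sup>2 - s\<^sup>2) / 4 * (w \<bullet> w) \<le> w \<bullet> (hessian V x *v w)" for w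
    by (rule hessian_quadratic_form_ge[OF smooth assms(3)])
  have "0 < s\<^sup>2"
    using \<open>0 < s\<close> by simp
  then have "\<nu>\<^sup>2 / 4 < (\<nu>\<^sup>2 - s\<^sup>2) / 4 + s\<^sup>2 / 2"
    by (simp add: field_simps)
  then show "sym_pos_def P"
    unfolding P_def by (rule lyapunov_matrix_sym_pos_def[OF transpose_hessian[OF smooth] bound])
  show "loewner_ge (Qmat \<nu> V x ** P + P ** transpose (Qmat \<nu> V x)) ((\<nu> - s) *\<^sub>R P)"
    unfolding Qmat_eq_block_matrix P_def
    by (rule lyapunov_inequality[OF transpose_hessian[OF smooth] \<open>0 < s\<close> bound])
qed

section \<open>The three damping regimes\<close>

text \<open>The names refer to \<open>y'' + \<nu> y' + \<alpha>\<^sub>0 y = 0\<close>, whose characteristic roots are the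
  negated roots of \<open>\<beta>\<^sup>2 - \<nu> \<beta> + \<alpha>\<^sub>0\<close>.\<close>

lemma underdamped_mu_and_lyapunov_equation:
  fixes V :: "real^'n::finite \<Rightarrow> real"
  assumes smooth: "smooth V" and above: "ereal (\<nu>\<^sup>2 / 4) < alpha0 V"
  shows "mu \<nu> V = ereal (\<nu> / 2)
    \<and> (\<exists>P. sym_pos_def P \<and>
          Qmat \<nu> V x ** P + P ** transpose (Qmat \<nu> V x) = (2 * real_of_ereal (mu \<nu> V)) *\<^sub>R P)"
proof -
  have alpha_above: "\<nu>\<^sup>2 / 4 < alpha V y" for y
    using less_le_trans[OF above alpha0_le_alpha] by simp
  then have mu: "mu \<nu> V = ereal (\<nu> / 2)"
    using mu_eq_half[OF smooth] less_imp_le by blast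
  show ?thesis
    using Qmat_lyapunov_equation[OF smooth alpha_above[of x]] mu by auto
qed

lemma overdamped_mu_and_lyapunov_inequality:
  fixes V :: "real^'n::finite \<Rightarrow> real"
  assumes smooth: "smooth V" and "0 < alpha0 V" and "alpha0 V < ereal (\<nu>\<^sup>2 / 4)"
  shows "mu \<nu> V = ereal ((\<nu> - sqrt (\<nu>\<^sup>2 - 4 * real_of_ereal (alpha0 V))) / 2)
    \<and> (\<exists>P. sym_pos_def P \<and>
          loewner_ge (Qmat \<nu> V x ** P + P ** transpose (Qmat \<nu> V x)) ((2 * real_of_ereal (mu \<nu> V)) *\<^sub>R P))"
proof -
  obtain a where a: "alpha0 V = ereal a" and "0 < a" "a < \<nu>\<^sup>2 / 4"
    using assms(2,3) by (cases "alpha0 V") auto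
  define s where "s = sqrt (\<nu>\<^sup>2 - 4 * a)"
  have "0 < s" and a_eq: "a = (\<nu>\<^sup>2 - s\<^sup>2) / 4"
    using \<open>a < \<nu>\<^sup>2 / 4\<close> by (simp_all add: s_def)
  have "mu \<nu> V = ereal (min_re_root \<nu> a)"
    unfolding mu_eq_INF_min_re_root[OF smooth]
    by (rule INF_ereal_mono_continuous[OF mono_min_re_root continuous_on_min_re_root])
      (simp add: a[symmetric] alpha0_def)
  also have "min_re_root \<nu> a = (\<nu> - s) / 2"
    using \<open>a < \<nu>\<^sup>2 / 4\<close> by (simp add: min_re_root_def s_def)
  finally have mu: "mu \<nu> V = ereal ((\<nu> - s) / 2)" .
  have "(\<nu>\<^sup>2 - s\<^sup>2) / 4 \<le> alpha V x"
    using alpha0_le_alpha[of V x] by (simp add: a a_eq[symmetric])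
  then have "\<exists>P. sym_pos_def P \<and> loewner_ge (Qmat \<nu> V x ** P + P ** transpose (Qmat \<nu> V x)) ((\<nu> - s) *\<^sub>R P)"
    using Qmat_lyapunov_inequality[OF smooth \<open>0 < s\<close>] by blast
  moreover have mu2: "2 * real_of_ereal (mu \<nu> V) = \<nu> - s"
    using mu by simp
  ultimately show ?thesis
    unfolding mu2 by (simp add: mu a s_def)
qed

lemma critically_damped_mu_and_lyapunov_inequality:
  fixes V :: "real^'n::finite \<Rightarrow> real"
  assumes smooth: "smooth V" and critical: "alpha0 V = ereal (\<nu>\<^sup>2 / 4)"
  shows "mu \<nu> V = ereal (\<nu> / 2)
    \<and> (\<forall>\<epsilon>. 0 < \<epsilon> \<longrightarrow>
         (\<exists>P. sym_pos_def P \<and>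
            loewner_ge (Qmat \<nu> V x ** P + P ** transpose (Qmat \<nu> V x))
              ((2 * real_of_ereal (mu \<nu> V) - \<epsilon>) *\<^sub>R P)))"
proof -
  have alpha_above: "\<nu>\<^sup>2 / 4 \<le> alpha V y" for y
    using alpha0_le_alpha[of V y] by (simp add: critical)
  then have mu: "mu \<nu> V = ereal (\<nu> / 2)"
    by (rule mu_eq_half[OF smooth])
  have "(\<nu>\<^sup>2 - \<epsilon>\<^sup>2) / 4 \<le> alpha V x" for \<epsilon>
    using alpha_above[of x] by (simp add: field_simps add_increasing)
  then have "\<exists>P. sym_pos_def P \<and> loewner_ge (Qmat \<nu> V x ** P + P ** transpose (Qmat \<nu> V x)) ((\<nu> - \<epsilon>) *\<^sub>R P)"
    if "0 < \<epsilon>" for \<epsilon>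
    using Qmat_lyapunov_inequality[OF smooth that] by blast
  then show ?thesis
    using mu by auto
qed

theorem lemma4p4:
  fixes V :: "real^'n::finite \<Rightarrow> real" and \<nu> :: real
  assumes nu_pos: "\<nu> > 0"
    and smooth: "smooth V"
  shows "(\<forall>x. positive_stable (Qmat \<nu> V x) \<longleftrightarrow> pos_def (hessian V x))
    \<and> (\<forall>x. pos_def (hessian V x) \<longrightarrow>
        (alpha0 V > ereal (\<nu>\<^sup>2 / 4) \<longrightarrow>
            mu \<nu> V = ereal (\<nu> / 2)
          \<and> (\<exists>P. sym_pos_def P \<and>
               Qmat \<nu> V x ** P + P ** transpose (Qmat \<nu> V x) = (2 * real_of_ereal (mu \<nu> V)) *\<^sub>R P))
      \<and> (0 < alpha0 V \<and> alpha0 V < ereal (\<nu>\<^sup>2 / 4) \<longrightarrow>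
            mu \<nu> V = ereal ((\<nu> - sqrt (\<nu>\<^sup>2 - 4 * real_of_ereal (alpha0 V))) / 2)
          \<and> (\<exists>P. sym_pos_def P \<and>
               loewner_ge (Qmat \<nu> V x ** P + P ** transpose (Qmat \<nu> V x))
                 ((2 * real_of_ereal (mu \<nu> V)) *\<^sub>R P)))
      \<and> (alpha0 V = ereal (\<nu>\<^sup>2 / 4) \<longrightarrow>
            mu \<nu> V = ereal (\<nu> / 2)
          \<and> (\<forall>\<epsilon>. 0 < \<epsilon> \<and> \<epsilon> < \<nu> \<longrightarrow>
               (\<exists>P. sym_pos_def P \<and>
                  loewner_ge (Qmat \<nu> V x ** P + P ** transpose (Qmat \<nu> V x))
                    ((2 * real_of_ereal (mu \<nu> V) - \<epsilon>) *\<^sub>R P)))))"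
  using positive_stable_Qmat_iff[OF smooth nu_pos] underdamped_mu_and_lyapunov_equation[OF smooth]
    overdamped_mu_and_lyapunov_inequality[OF smooth] critically_damped_mu_and_lyapunov_inequality[OF smooth]
  by blast

end
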